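(* Let $H$ be a group, let $\phi\in\operatorname{Aut}(H)$ and let $K$ be a proper subgroup of $H$ such that $K$ is a proper subgroup of its normalizer $N_H(K)$ and $K$ contains an element of infinite order. Let $G=H\ast_{(K,\phi)}=\langle H, t;\ tkt^{-1}=\phi(k),\ k\in K\rangle$. Then $\mathbb{Z}\times\mathbb{Z}$ embeds into $G$.
   Context: For a group $H$, $\phi\in\operatorname{Aut}(H)$ and a proper subgroup $K\lneq H$, the automorphism-induced HNN-extension $H\ast_{(K,\phi)}$ is the group given by the relative presentation $\langle H, t;\ tkt^{-1}=\phi(k),\ k\in K\rangle$. *)

theory Defs
  imports "HOL-Algebra.Algebra"
begin

text \<open>Words are lists of letters: Inl a is the generator a in carrier H,
Inr True is t, Inr False is t^-1.\<close>

type_synonym 'h hnn_word = "('h + bool) list"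

definition hnn_words :: "('h, 'm) monoid_scheme \<Rightarrow> 'h hnn_word set" where
  "hnn_words H = {w. \<forall>x\<in>set w. (case x of Inl a \<Rightarrow> a \<in> carrier H | Inr _ \<Rightarrow> True)}"

inductive hnn_eq :: "('h, 'm) monoid_scheme \<Rightarrow> 'h set \<Rightarrow> ('h \<Rightarrow> 'h)
    \<Rightarrow> 'h hnn_word \<Rightarrow> 'h hnn_word \<Rightarrow> bool"
  for H K \<phi> where
  hnn_refl: "hnn_eq H K \<phi> w w"
| hnn_sym: "hnn_eq H K \<phi> u v \<Longrightarrow> hnn_eq H K \<phi> v u"
| hnn_trans: "hnn_eq H K \<phi> u v \<Longrightarrow> hnn_eq H K \<phi> v w \<Longrightarrow> hnn_eq H K \<phi> u w"
| hnn_cong: "hnn_eq H K \<phi> u v \<Longrightarrow> hnn_eq H K \<phi> (a @ u @ b) (a @ v @ b)"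
| hnn_mult: "a \<in> carrier H \<Longrightarrow> b \<in> carrier H \<Longrightarrow>
    hnn_eq H K \<phi> [Inl a, Inl b] [Inl (a \<otimes>\<^bsub>H\<^esub> b)]"
| hnn_one: "hnn_eq H K \<phi> [Inl \<one>\<^bsub>H\<^esub>] []"
| hnn_t_tinv: "hnn_eq H K \<phi> [Inr True, Inr False] []"
| hnn_tinv_t: "hnn_eq H K \<phi> [Inr False, Inr True] []"
| hnn_conj: "k \<in> K \<Longrightarrow> hnn_eq H K \<phi> [Inr True, Inl k, Inr False] [Inl (\<phi> k)]"

definition hnn_class :: "('h, 'm) monoid_scheme \<Rightarrow> 'h set \<Rightarrow> ('h \<Rightarrow> 'h)
    \<Rightarrow> 'h hnn_word \<Rightarrow> 'h hnn_word set" where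
  "hnn_class H K \<phi> w = {v \<in> hnn_words H. hnn_eq H K \<phi> v w}"

definition HNN :: "('h, 'm) monoid_scheme \<Rightarrow> 'h set \<Rightarrow> ('h \<Rightarrow> 'h)
    \<Rightarrow> 'h hnn_word set monoid" where
  "HNN H K \<phi> =
     \<lparr> carrier = hnn_class H K \<phi> ` hnn_words H,
       monoid.mult = (\<lambda>A B. hnn_class H K \<phi> ((SOME u. u \<in> A) @ (SOME v. v \<in> B))),
       one = hnn_class H K \<phi> [] \<rparr>"

end

theory Submission
  imports Defs
begin

(* Pick k in K of infinite order and g in N_H(K) - K, and put y = t^-1 phi(g) t g^-1.
   As g^-1 k g lies in K, the defining relations move k across y, so k and y commute and
   (a, b) |-> k^a y^b is a homomorphism from Z x Z.  For injectivity let the extension act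
   on H x Z: an element of H multiplies the first coordinate on the left, and t sends
   (h, m) to (phi h, m + [h in K]).  This respects t k t^-1 = phi k since k h in K iff h in K.
   Because g is not in K, y sends (g, m) to (g, m + 1), whereas k only changes the first
   coordinate; hence k^a y^b sends (g, 0) to (k^a g, b), which determines a and b. *)

lemma (in group) inv_commute:
  assumes "x \<in> carrier G" "y \<in> carrier G" "x \<otimes> y = y \<otimes> x"
  shows "inv x \<otimes> y = y \<otimes> inv x"
proof -
  have "inv x \<otimes> y = inv x \<otimes> (y \<otimes> x) \<otimes> inv x"
    using assms(1,2) by (simp add: m_assoc)
  also have "\<dots> = inv x \<otimes> (x \<otimes> y) \<otimes> inv x"
    using assms(3) by simp
  also have "\<dots> = y \<otimes> inv x"
    using assms(1,2) by (simp add: m_assoc[symmetric])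
  finally show ?thesis .
qed

lemma (in group) int_pow_commute:
  assumes "x \<in> carrier G" "y \<in> carrier G" "x \<otimes> y = y \<otimes> x"
  shows "x [^] (i::int) \<otimes> y = y \<otimes> x [^] i"
proof (cases i rule: int_cases)
  case (nonneg n)
  then show ?thesis using group_commutes_pow[OF assms(3,1,2)] by (simp add: int_pow_int)
next
  case (neg n)
  have "x [^] Suc n \<otimes> y = y \<otimes> x [^] Suc n"
    by (rule group_commutes_pow[OF assms(3,1,2)])
  then show ?thesis
    using inv_commute[OF nat_pow_closed[OF assms(1)] assms(2)] int_pow_neg_int[OF assms(1), of "Suc n"]
    by (simp only: neg)
qed

lemma (in group) hom_integer_pair:
  assumes "x \<in> carrier G" "y \<in> carrier G" "x \<otimes> y = y \<otimes> x"
  shows "(\<lambda>(a, b). x [^] a \<otimes> y [^] b) \<in> hom (integer_group \<times>\<times> integer_group) G"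
    (is "?f \<in> _")
proof (rule homI)
  fix p q :: "int \<times> int"
  obtain a b c d where pq: "p = (a, b)" "q = (c, d)" by fastforce
  have "y [^] b \<otimes> x [^] c = x [^] c \<otimes> y [^] b"
    using int_pow_commute[OF assms(2) int_pow_closed[OF assms(1)]
        int_pow_commute[OF assms, symmetric]] .
  then have "x [^] a \<otimes> y [^] b \<otimes> (x [^] c \<otimes> y [^] d)
      = x [^] a \<otimes> x [^] c \<otimes> (y [^] b \<otimes> y [^] d)"
    using assms(1,2) by (simp add: m_assoc[symmetric]) (simp add: m_assoc)
  then show "?f (p \<otimes>\<^bsub>integer_group \<times>\<times> integer_group\<^esub> q) = ?f p \<otimes> ?f q"
    using assms(1,2) by (simp add: pq int_pow_mult)
qed (use assms in auto)

lemma (in group) int_pow_act_orbit: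
  assumes x: "x \<in> carrier G"
    and act_mult: "\<And>y z s. y \<in> carrier G \<Longrightarrow> z \<in> carrier G \<Longrightarrow> s \<in> S \<Longrightarrow>
      act (y \<otimes> z) s = act y (act z s)"
    and act_one: "\<And>s. s \<in> S \<Longrightarrow> act \<one> s = s"
    and orbit: "\<And>i. q i \<in> S" "\<And>i. act x (q i) = q (i + 1)"
  shows "act (x [^] (n::int)) (q i) = q (i + n)"
proof (induction n rule: int_induct[where k = 0])
  case base
  then show ?case using act_one orbit(1) by simp
next
  case (step1 n)
  have "x [^] (n + 1) = x \<otimes> x [^] n"
    using int_pow_mult[OF x, of 1 n] x by (simp add: add.commute)
  then show ?case using step1.IH act_mult x orbit by (simp add: add.assoc)
next
  case (step2 n)
  have inv_step: "act (inv x) (q j) = q (j - 1)" for j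
  proof -
    have "act (inv x) (q j) = act (inv x) (act x (q (j - 1)))"
      using orbit(2)[of "j - 1"] by simp
    also have "\<dots> = act (inv x \<otimes> x) (q (j - 1))"
      using act_mult[OF inv_closed[OF x] x orbit(1)] by simp
    finally show ?thesis using x act_one orbit(1) by simp
  qed
  have "x [^] (n - 1) = inv x \<otimes> x [^] n"
    using int_pow_mult[OF x, of "-1" n] x by (simp add: int_pow_neg)
  then show ?case using step2.IH act_mult x orbit inv_step by (simp add: algebra_simps)
qed

lemma (in group) normalizer_conj_mem:
  assumes "K \<subseteq> carrier G" "g \<in> normalizer G K" "k \<in> K"
  shows "inv g \<otimes> k \<otimes> g \<in> K"
proof -
  have g: "g \<in> carrier G" and "g <# K #> inv g = K"
    using assms(1,2) by (simp_all add: normalizer_def stabilizer_def)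
  then obtain x where x: "x \<in> K" "k = g \<otimes> x \<otimes> inv g"
    using assms(3) by (auto simp: l_coset_def r_coset_def)
  have "x \<in> carrier G" using x(1) assms(1) by blast
  then have "inv g \<otimes> k \<otimes> g = x"
    using g x(2) by (simp add: m_assoc) (simp add: m_assoc[symmetric])
  with x show ?thesis by simp
qed

lemma (in group) subgroup_mult_left_mem_iff:
  assumes "subgroup K G" "k \<in> K" "a \<in> carrier G"
  shows "k \<otimes> a \<in> K \<longleftrightarrow> a \<in> K"
proof
  have k: "k \<in> carrier G" using assms subgroup.subset by blast
  assume "k \<otimes> a \<in> K"
  then have "inv k \<otimes> (k \<otimes> a) \<in> K"
    using subgroup.m_closed[OF assms(1) subgroup.m_inv_closed[OF assms(1,2)]] by blast
  then show "a \<in> K" using k assms(3) by (simp add: m_assoc[symmetric])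
next
  assume "a \<in> K"
  then show "k \<otimes> a \<in> K" using subgroup.m_closed[OF assms(1,2)] by blast
qed

lemma automorphism_facts:
  assumes "group H" "\<phi> \<in> iso H H"
  shows "\<And>x. x \<in> carrier H \<Longrightarrow> \<phi> x \<in> carrier H"
    and "\<And>x y. x \<in> carrier H \<Longrightarrow> y \<in> carrier H \<Longrightarrow>
      \<phi> (x \<otimes>\<^bsub>H\<^esub> y) = \<phi> x \<otimes>\<^bsub>H\<^esub> \<phi> y"
    and "\<And>x. x \<in> carrier H \<Longrightarrow> inv_into (carrier H) \<phi> x \<in> carrier H"
    and "\<And>x. x \<in> carrier H \<Longrightarrow> \<phi> (inv_into (carrier H) \<phi> x) = x"
    and "\<And>x. x \<in> carrier H \<Longrightarrow> inv_into (carrier H) \<phi> (\<phi> x) = x"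
    and "\<phi> \<one>\<^bsub>H\<^esub> = \<one>\<^bsub>H\<^esub>"
proof -
  have hom: "\<phi> \<in> hom H H" and bij: "bij_betw \<phi> (carrier H) (carrier H)"
    using assms(2) by (auto simp: iso_def)
  then interpret group_hom H H \<phi>
    using assms(1) by (simp add: group_hom_def group_hom_axioms_def)
  show "\<And>x. x \<in> carrier H \<Longrightarrow> \<phi> x \<in> carrier H"
    and "\<And>x y. x \<in> carrier H \<Longrightarrow> y \<in> carrier H \<Longrightarrow>
      \<phi> (x \<otimes>\<^bsub>H\<^esub> y) = \<phi> x \<otimes>\<^bsub>H\<^esub> \<phi> y"
    and "\<phi> \<one>\<^bsub>H\<^esub> = \<one>\<^bsub>H\<^esub>"
    by simp_all
  show "\<And>x. x \<in> carrier H \<Longrightarrow> inv_into (carrier H) \<phi> x \<in> carrier H"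
    using bij by (metis bij_betw_def inv_into_into)
  show "\<And>x. x \<in> carrier H \<Longrightarrow> \<phi> (inv_into (carrier H) \<phi> x) = x"
    using bij by (rule bij_betw_inv_into_right)
  show "\<And>x. x \<in> carrier H \<Longrightarrow> inv_into (carrier H) \<phi> (\<phi> x) = x"
    using bij by (rule bij_betw_inv_into_left)
qed

declare hnn_trans [trans]

lemma hnn_eq_append:
  "hnn_eq H K \<phi> u u' \<Longrightarrow> hnn_eq H K \<phi> v v' \<Longrightarrow> hnn_eq H K \<phi> (u @ v) (u' @ v')"
  by (metis append.left_neutral append_Nil2 hnn_cong hnn_trans)

lemma hnn_words_append [simp]:
  "u @ v \<in> hnn_words H \<longleftrightarrow> u \<in> hnn_words H \<and> v \<in> hnn_words H"
  by (auto simp: hnn_words_def)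

lemma hnn_class_eqI: "hnn_eq H K \<phi> u v \<Longrightarrow> hnn_class H K \<phi> u = hnn_class H K \<phi> v"
  unfolding hnn_class_def by (meson hnn_sym hnn_trans)

lemma hnn_class_self: "u \<in> hnn_words H \<Longrightarrow> u \<in> hnn_class H K \<phi> u"
  by (simp add: hnn_class_def hnn_refl)

lemma hnn_class_some:
  assumes "u \<in> hnn_words H"
  shows "hnn_eq H K \<phi> (SOME w. w \<in> hnn_class H K \<phi> u) u"
proof -
  have "(SOME w. w \<in> hnn_class H K \<phi> u) \<in> hnn_class H K \<phi> u"
    by (rule someI, rule hnn_class_self[OF assms])
  then show ?thesis by (simp add: hnn_class_def)
qed

lemma hnn_class_in_carrier: "w \<in> hnn_words H \<Longrightarrow> hnn_class H K \<phi> w \<in> carrier (HNN H K \<phi>)"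
  by (simp add: HNN_def)

lemma hnn_class_mult:
  assumes "u \<in> hnn_words H" "v \<in> hnn_words H"
  shows "hnn_class H K \<phi> u \<otimes>\<^bsub>HNN H K \<phi>\<^esub> hnn_class H K \<phi> v = hnn_class H K \<phi> (u @ v)"
  using hnn_class_eqI[OF hnn_eq_append[OF hnn_class_some hnn_class_some]] assms
  by (simp add: HNN_def)

fun hnn_inv_letter :: "('h, 'm) monoid_scheme \<Rightarrow> 'h + bool \<Rightarrow> 'h + bool" where
  "hnn_inv_letter H (Inl a) = Inl (inv\<^bsub>H\<^esub> a)"
| "hnn_inv_letter H (Inr e) = Inr (\<not> e)"

definition hnn_inv_word :: "('h, 'm) monoid_scheme \<Rightarrow> 'h hnn_word \<Rightarrow> 'h hnn_word" where
  "hnn_inv_word H w = rev (map (hnn_inv_letter H) w)"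

lemma hnn_inv_word_in_words:
  assumes "group H" "w \<in> hnn_words H"
  shows "hnn_inv_word H w \<in> hnn_words H"
  using assms
  by (fastforce simp: hnn_words_def hnn_inv_word_def elim: hnn_inv_letter.elims
      intro: group.inv_closed split: sum.splits)

lemma hnn_eq_inv_letter_cancel:
  assumes "group H" "[x] \<in> hnn_words H"
  shows "hnn_eq H K \<phi> [hnn_inv_letter H x, x] []"
proof (cases x)
  case (Inl a)
  with assms have a: "a \<in> carrier H" by (simp add: hnn_words_def)
  have "hnn_eq H K \<phi> [Inl (inv\<^bsub>H\<^esub> a), Inl a] [Inl \<one>\<^bsub>H\<^esub>]"
    using hnn_mult[of "inv\<^bsub>H\<^esub> a" H a K \<phi>] a assms(1) by (simp add: group.l_inv)
  then show ?thesis using Inl hnn_one hnn_trans by fastforce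
next
  case (Inr e)
  then show ?thesis by (cases e) (simp_all add: hnn_t_tinv hnn_tinv_t)
qed

lemma hnn_eq_inv_word_cancel:
  assumes "group H" "w \<in> hnn_words H"
  shows "hnn_eq H K \<phi> (hnn_inv_word H w @ w) []"
  using assms(2)
proof (induction w)
  case Nil
  then show ?case by (simp add: hnn_inv_word_def hnn_refl)
next
  case (Cons x w)
  then have x: "[x] \<in> hnn_words H" and w: "w \<in> hnn_words H"
    using hnn_words_append[of "[x]" w] by auto
  have "hnn_eq H K \<phi> (hnn_inv_word H (x # w) @ x # w) (hnn_inv_word H w @ [] @ w)"
    using hnn_cong[OF hnn_eq_inv_letter_cancel[OF assms(1) x]]
    by (simp add: hnn_inv_word_def)
  then show ?case using Cons.IH[OF w] hnn_trans by fastforce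
qed

lemma group_HNN:
  assumes "group H"
  shows "group (HNN H K \<phi>)"
proof -
  have carrier: "carrier (HNN H K \<phi>) = hnn_class H K \<phi> ` hnn_words H"
    by (simp add: HNN_def)
  have one: "\<one>\<^bsub>HNN H K \<phi>\<^esub> = hnn_class H K \<phi> []"
    by (simp add: HNN_def)
  have nil: "[] \<in> hnn_words H"
    by (simp add: hnn_words_def)
  show ?thesis
  proof (rule groupI)
    show "\<one>\<^bsub>HNN H K \<phi>\<^esub> \<in> carrier (HNN H K \<phi>)"
      using carrier one nil by simp
  next
    fix x y assume "x \<in> carrier (HNN H K \<phi>)" "y \<in> carrier (HNN H K \<phi>)"
    then show "x \<otimes>\<^bsub>HNN H K \<phi>\<^esub> y \<in> carrier (HNN H K \<phi>)"
      by (auto simp: carrier hnn_class_mult)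
  next
    fix x y z assume "x \<in> carrier (HNN H K \<phi>)" "y \<in> carrier (HNN H K \<phi>)"
      "z \<in> carrier (HNN H K \<phi>)"
    then show "x \<otimes>\<^bsub>HNN H K \<phi>\<^esub> y \<otimes>\<^bsub>HNN H K \<phi>\<^esub> z
        = x \<otimes>\<^bsub>HNN H K \<phi>\<^esub> (y \<otimes>\<^bsub>HNN H K \<phi>\<^esub> z)"
      by (auto simp: carrier hnn_class_mult)
  next
    fix x assume "x \<in> carrier (HNN H K \<phi>)"
    then show "\<one>\<^bsub>HNN H K \<phi>\<^esub> \<otimes>\<^bsub>HNN H K \<phi>\<^esub> x = x"
      using nil by (auto simp: carrier one hnn_class_mult)
  next
    fix x assume "x \<in> carrier (HNN H K \<phi>)"
    then obtain w where w: "w \<in> hnn_words H" and x: "x = hnn_class H K \<phi> w"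
      by (auto simp: carrier)
    have "hnn_class H K \<phi> (hnn_inv_word H w) \<otimes>\<^bsub>HNN H K \<phi>\<^esub> x = \<one>\<^bsub>HNN H K \<phi>\<^esub>"
      using hnn_class_eqI[OF hnn_eq_inv_word_cancel[OF assms w]]
      by (simp add: x one hnn_class_mult hnn_inv_word_in_words[OF assms w] w)
    then show "\<exists>y\<in>carrier (HNN H K \<phi>). y \<otimes>\<^bsub>HNN H K \<phi>\<^esub> x = \<one>\<^bsub>HNN H K \<phi>\<^esub>"
      using hnn_inv_word_in_words[OF assms w] carrier by blast
  qed
qed

(* Letters outside carrier H act trivially, so that every word, not only those in hnn_words H,
   maps H x int into itself; the congruence hnn_eq relates such words too. *)
fun hnn_letter_act :: "('h, 'm) monoid_scheme \<Rightarrow> 'h set \<Rightarrow> ('h \<Rightarrow> 'h)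
    \<Rightarrow> 'h + bool \<Rightarrow> 'h \<times> int \<Rightarrow> 'h \<times> int" where
  "hnn_letter_act H K \<phi> (Inl a) (h, m) = (if a \<in> carrier H then a \<otimes>\<^bsub>H\<^esub> h else h, m)"
| "hnn_letter_act H K \<phi> (Inr True) (h, m) = (\<phi> h, m + of_bool (h \<in> K))"
| "hnn_letter_act H K \<phi> (Inr False) (h, m) =
    (inv_into (carrier H) \<phi> h, m - of_bool (inv_into (carrier H) \<phi> h \<in> K))"

definition hnn_word_act :: "('h, 'm) monoid_scheme \<Rightarrow> 'h set \<Rightarrow> ('h \<Rightarrow> 'h)
    \<Rightarrow> 'h hnn_word \<Rightarrow> 'h \<times> int \<Rightarrow> 'h \<times> int" where
  "hnn_word_act H K \<phi> w = foldr (hnn_letter_act H K \<phi>) w"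

lemma hnn_word_act_simps [simp]:
  "hnn_word_act H K \<phi> [] p = p"
  "hnn_word_act H K \<phi> (x # w) p = hnn_letter_act H K \<phi> x (hnn_word_act H K \<phi> w p)"
  "hnn_word_act H K \<phi> (u @ v) p = hnn_word_act H K \<phi> u (hnn_word_act H K \<phi> v p)"
  by (simp_all add: hnn_word_act_def)

lemma hnn_word_act_closed:
  assumes "group H" "\<phi> \<in> iso H H" "fst p \<in> carrier H"
  shows "fst (hnn_word_act H K \<phi> w p) \<in> carrier H"
proof (induction w)
  case (Cons x w)
  obtain h m where hm: "hnn_word_act H K \<phi> w p = (h, m)" "h \<in> carrier H"
    using Cons.IH by (cases "hnn_word_act H K \<phi> w p") simp
  show ?case
  proof (cases x)
    case (Inl a)
    then show ?thesis using hm monoid.m_closed[OF group.is_monoid[OF assms(1)]] by simp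
  next
    case (Inr e)
    have "\<phi> h \<in> carrier H" "inv_into (carrier H) \<phi> h \<in> carrier H"
      using hm(2) automorphism_facts(1,3)[OF assms(1,2)] by blast+
    with Inr show ?thesis using hm(1) by (cases e) simp_all
  qed
qed (simp add: assms(3))

lemma hnn_conj_act:
  assumes "group H" "\<phi> \<in> iso H H" "subgroup K H" "k \<in> K" "h \<in> carrier H"
  shows "hnn_word_act H K \<phi> [Inr True, Inl k, Inr False] (h, m) = (\<phi> k \<otimes>\<^bsub>H\<^esub> h, m)"
proof -
  interpret group H by fact
  note \<phi> = automorphism_facts[OF assms(1,2)]
  define a where "a = inv_into (carrier H) \<phi> h"
  have a: "a \<in> carrier H" "\<phi> a = h"
    unfolding a_def by (simp_all add: \<phi>(3,4) assms(5))
  have k: "k \<in> carrier H" using assms(3,4) subgroup.subset by blast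
  have "k \<otimes>\<^bsub>H\<^esub> a \<in> K \<longleftrightarrow> a \<in> K"
    by (rule subgroup_mult_left_mem_iff[OF assms(3,4) a(1)])
  then show ?thesis
    using a k \<phi>(1)[OF k] \<phi>(2)[OF k a(1)] \<phi>(5)[OF m_closed[OF k a(1)]]
    by (simp add: a_def[symmetric])
qed

lemma hnn_word_act_hnn_eq:
  assumes "group H" "\<phi> \<in> iso H H" "subgroup K H"
    and "hnn_eq H K \<phi> u v" "fst p \<in> carrier H"
  shows "hnn_word_act H K \<phi> u p = hnn_word_act H K \<phi> v p"
  using assms(4,5)
proof (induction arbitrary: p rule: hnn_eq.induct)
  case (hnn_sym u v)
  then show ?case by simp
next
  case (hnn_trans u v w)
  then show ?case by simp
next
  case (hnn_cong u v a b)
  then show ?case using hnn_word_act_closed[OF assms(1,2)] by simp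
next
  case (hnn_mult a b)
  then show ?case
    using monoid.m_assoc[OF group.is_monoid[OF assms(1)]] monoid.m_closed[OF group.is_monoid[OF assms(1)]]
    by (cases p) simp
next
  case hnn_one
  then show ?case using monoid.l_one[OF group.is_monoid[OF assms(1)]] by (cases p) simp
next
  case hnn_t_tinv
  then show ?case using automorphism_facts(3,4)[OF assms(1,2)] by (cases p) simp
next
  case hnn_tinv_t
  then show ?case using automorphism_facts(1,5)[OF assms(1,2)] by (cases p) simp
next
  case (hnn_conj k)
  then have "\<phi> k \<in> carrier H"
    using subgroup.subset[OF assms(3)] automorphism_facts(1)[OF assms(1,2)] by blast
  with hnn_conj show ?case using hnn_conj_act[OF assms(1-3)] by (cases p) auto
qed simp

definition hnn_act :: "('h, 'm) monoid_scheme \<Rightarrow> 'h set \<Rightarrow> ('h \<Rightarrow> 'h)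
    \<Rightarrow> 'h hnn_word set \<Rightarrow> 'h \<times> int \<Rightarrow> 'h \<times> int" where
  "hnn_act H K \<phi> C = hnn_word_act H K \<phi> (SOME w. w \<in> C)"

lemma hnn_act_class:
  assumes "group H" "\<phi> \<in> iso H H" "subgroup K H" "w \<in> hnn_words H" "fst p \<in> carrier H"
  shows "hnn_act H K \<phi> (hnn_class H K \<phi> w) p = hnn_word_act H K \<phi> w p"
  unfolding hnn_act_def by (rule hnn_word_act_hnn_eq[OF assms(1-3) hnn_class_some[OF assms(4)] assms(5)])

lemma hnn_act_mult:
  assumes "group H" "\<phi> \<in> iso H H" "subgroup K H"
    and "C \<in> carrier (HNN H K \<phi>)" "D \<in> carrier (HNN H K \<phi>)" "fst p \<in> carrier H"
  shows "hnn_act H K \<phi> (C \<otimes>\<^bsub>HNN H K \<phi>\<^esub> D) p = hnn_act H K \<phi> C (hnn_act H K \<phi> D p)"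
proof -
  obtain u v where u: "u \<in> hnn_words H" "C = hnn_class H K \<phi> u"
    and v: "v \<in> hnn_words H" "D = hnn_class H K \<phi> v"
    using assms(4,5) by (auto simp: HNN_def)
  show ?thesis
    using hnn_word_act_closed[OF assms(1,2,6)] assms(6) u v
    by (simp add: hnn_class_mult hnn_act_class[OF assms(1-3)])
qed

lemma hnn_act_one:
  assumes "group H" "\<phi> \<in> iso H H" "subgroup K H" "fst p \<in> carrier H"
  shows "hnn_act H K \<phi> \<one>\<^bsub>HNN H K \<phi>\<^esub> p = p"
  using hnn_act_class[OF assms(1-3) _ assms(4), of "[]"] by (simp add: HNN_def hnn_words_def)

lemma hnn_eq_regroup:
  assumes "a \<in> carrier H" "b \<in> carrier H" "c \<in> carrier H" "d \<in> carrier H"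
    and "a \<otimes>\<^bsub>H\<^esub> b = c \<otimes>\<^bsub>H\<^esub> d"
  shows "hnn_eq H K \<phi> [Inl a, Inl b] [Inl c, Inl d]"
proof -
  have "hnn_eq H K \<phi> [Inl a, Inl b] [Inl (c \<otimes>\<^bsub>H\<^esub> d)]"
    using hnn_mult[OF assms(1,2)] assms(5) by simp
  then show ?thesis using hnn_trans hnn_sym[OF hnn_mult[OF assms(3,4)]] by blast
qed

lemma hnn_eq_stable_letter_conj:
  assumes "k \<in> K"
  shows "hnn_eq H K \<phi> [Inr True, Inl k] [Inl (\<phi> k), Inr True]"
    and "hnn_eq H K \<phi> [Inr False, Inl (\<phi> k)] [Inl k, Inr False]"
proof -
  have "hnn_eq H K \<phi> [Inr True, Inl k] [Inr True, Inl k, Inr False, Inr True]"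
    using hnn_cong[OF hnn_sym[OF hnn_tinv_t], where a = "[Inr True, Inl k]" and b = "[]"]
    by simp
  also have "hnn_eq H K \<phi> \<dots> [Inl (\<phi> k), Inr True]"
    using hnn_cong[OF hnn_conj[OF assms], where a = "[]" and b = "[Inr True]"] by simp
  finally show "hnn_eq H K \<phi> [Inr True, Inl k] [Inl (\<phi> k), Inr True]" .
  have "hnn_eq H K \<phi> [Inr False, Inl (\<phi> k)] [Inr False, Inr True, Inl k, Inr False]"
    using hnn_cong[OF hnn_sym[OF hnn_conj[OF assms]], where a = "[Inr False]" and b = "[]"]
    by simp
  also have "hnn_eq H K \<phi> \<dots> [Inl k, Inr False]"
    using hnn_cong[OF hnn_tinv_t, where a = "[]" and b = "[Inl k, Inr False]"] by simp
  finally show "hnn_eq H K \<phi> [Inr False, Inl (\<phi> k)] [Inl k, Inr False]" .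
qed

definition hnn_twist :: "('h, 'm) monoid_scheme \<Rightarrow> ('h \<Rightarrow> 'h) \<Rightarrow> 'h \<Rightarrow> 'h hnn_word" where
  "hnn_twist H \<phi> g = [Inr False, Inl (\<phi> g), Inr True, Inl (inv\<^bsub>H\<^esub> g)]"

lemma hnn_twist_in_words:
  assumes "group H" "\<phi> \<in> iso H H" "g \<in> carrier H"
  shows "hnn_twist H \<phi> g \<in> hnn_words H"
  using assms automorphism_facts(1)[OF assms(1,2)]
  by (simp add: hnn_twist_def hnn_words_def group.inv_closed)

lemma hnn_twist_commute:
  assumes "group H" "\<phi> \<in> iso H H" "subgroup K H"
    and "k \<in> K" "g \<in> carrier H" "inv\<^bsub>H\<^esub> g \<otimes>\<^bsub>H\<^esub> k \<otimes>\<^bsub>H\<^esub> g \<in> K"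
  shows "hnn_eq H K \<phi> (hnn_twist H \<phi> g @ [Inl k]) ([Inl k] @ hnn_twist H \<phi> g)"
proof -
  interpret group H by fact
  note \<phi> = automorphism_facts[OF assms(1,2)]
  define j where "j = inv\<^bsub>H\<^esub> g \<otimes>\<^bsub>H\<^esub> k \<otimes>\<^bsub>H\<^esub> g"
  have k: "k \<in> carrier H" using assms(3,4) subgroup.subset by blast
  have j: "j \<in> K" "j \<in> carrier H"
    using assms(3,6) subgroup.subset unfolding j_def by blast+
  have "inv\<^bsub>H\<^esub> g \<otimes>\<^bsub>H\<^esub> k = j \<otimes>\<^bsub>H\<^esub> inv\<^bsub>H\<^esub> g"
    using assms(5) k by (simp add: j_def m_assoc)
  then have regroup: "hnn_eq H K \<phi> [Inl (inv\<^bsub>H\<^esub> g), Inl k] [Inl j, Inl (inv\<^bsub>H\<^esub> g)]"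
    by (rule hnn_eq_regroup[OF inv_closed[OF assms(5)] k j(2) inv_closed[OF assms(5)]])
  have "hnn_eq H K \<phi> (hnn_twist H \<phi> g @ [Inl k])
      [Inr False, Inl (\<phi> g), Inr True, Inl j, Inl (inv\<^bsub>H\<^esub> g)]"
    using hnn_cong[OF regroup, where a = "[Inr False, Inl (\<phi> g), Inr True]" and b = "[]"]
    by (simp add: hnn_twist_def)
  also have "hnn_eq H K \<phi> \<dots> [Inr False, Inl (\<phi> g), Inl (\<phi> j), Inr True, Inl (inv\<^bsub>H\<^esub> g)]"
    using hnn_cong[OF hnn_eq_stable_letter_conj(1)[OF j(1)],
        where a = "[Inr False, Inl (\<phi> g)]" and b = "[Inl (inv\<^bsub>H\<^esub> g)]"]
    by simp
  also have "hnn_eq H K \<phi> \<dots> [Inr False, Inl (\<phi> k), Inl (\<phi> g), Inr True, Inl (inv\<^bsub>H\<^esub> g)]"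
  proof -
    have "g \<otimes>\<^bsub>H\<^esub> j = k \<otimes>\<^bsub>H\<^esub> g"
      using assms(5) k by (simp add: j_def m_assoc[symmetric])
    then have "\<phi> g \<otimes>\<^bsub>H\<^esub> \<phi> j = \<phi> k \<otimes>\<^bsub>H\<^esub> \<phi> g"
      using \<phi>(2) assms(5) j(2) k by metis
    then have regroup: "hnn_eq H K \<phi> [Inl (\<phi> g), Inl (\<phi> j)] [Inl (\<phi> k), Inl (\<phi> g)]"
      by (rule hnn_eq_regroup[OF \<phi>(1)[OF assms(5)] \<phi>(1)[OF j(2)] \<phi>(1)[OF k] \<phi>(1)[OF assms(5)]])
    show ?thesis
      using hnn_cong[OF regroup, where a = "[Inr False]" and b = "[Inr True, Inl (inv\<^bsub>H\<^esub> g)]"]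
      by simp
  qed
  also have "hnn_eq H K \<phi> \<dots> ([Inl k] @ hnn_twist H \<phi> g)"
    using hnn_cong[OF hnn_eq_stable_letter_conj(2)[OF assms(4)],
        where a = "[]" and b = "[Inl (\<phi> g), Inr True, Inl (inv\<^bsub>H\<^esub> g)]"]
    by (simp add: hnn_twist_def)
  finally show ?thesis .
qed

lemma hnn_word_act_twist:
  assumes "group H" "\<phi> \<in> iso H H" "subgroup K H" "g \<in> carrier H" "g \<notin> K"
  shows "hnn_word_act H K \<phi> (hnn_twist H \<phi> g) (g, m) = (g, m + 1)"
proof -
  interpret group H by fact
  show ?thesis
    using assms automorphism_facts(1,5,6)[OF assms(1,2)] subgroup.one_closed[OF assms(3)]
    by (simp add: hnn_twist_def)
qed

lemma hnn_act_pow_letter: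
  assumes "group H" "\<phi> \<in> iso H H" "subgroup K H" "k \<in> carrier H" "h \<in> carrier H"
  shows "hnn_act H K \<phi> (hnn_class H K \<phi> [Inl k] [^]\<^bsub>HNN H K \<phi>\<^esub> (a::int)) (h, m)
    = (k [^]\<^bsub>H\<^esub> a \<otimes>\<^bsub>H\<^esub> h, m)"
proof -
  interpret G: group H by fact
  interpret HNN: group "HNN H K \<phi>" by (rule group_HNN[OF assms(1)])
  have letter: "[Inl k] \<in> hnn_words H" using assms(4) by (simp add: hnn_words_def)
  have step: "hnn_act H K \<phi> (hnn_class H K \<phi> [Inl k]) (k [^]\<^bsub>H\<^esub> i \<otimes>\<^bsub>H\<^esub> h, m)
      = (k [^]\<^bsub>H\<^esub> (i + 1) \<otimes>\<^bsub>H\<^esub> h, m)" for i :: int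
    using hnn_act_class[OF assms(1-3) letter] assms(4,5) G.int_pow_mult[OF assms(4), of 1 i]
    by (simp add: G.m_assoc add.commute)
  have "hnn_act H K \<phi> (hnn_class H K \<phi> [Inl k] [^]\<^bsub>HNN H K \<phi>\<^esub> a)
      (k [^]\<^bsub>H\<^esub> (0::int) \<otimes>\<^bsub>H\<^esub> h, m) = (k [^]\<^bsub>H\<^esub> (0 + a) \<otimes>\<^bsub>H\<^esub> h, m)"
    by (rule HNN.int_pow_act_orbit[where S = "{p. fst p \<in> carrier H}"])
      (use hnn_class_in_carrier[OF letter] hnn_act_mult[OF assms(1-3)] hnn_act_one[OF assms(1-3)]
        step assms(4,5) in auto)
  then show ?thesis using assms(5) by simp
qed

lemma hnn_act_pow_twist:
  assumes "group H" "\<phi> \<in> iso H H" "subgroup K H" "g \<in> carrier H" "g \<notin> K"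
  shows "hnn_act H K \<phi> (hnn_class H K \<phi> (hnn_twist H \<phi> g) [^]\<^bsub>HNN H K \<phi>\<^esub> (b::int)) (g, m)
    = (g, m + b)"
proof -
  interpret HNN: group "HNN H K \<phi>" by (rule group_HNN[OF assms(1)])
  note twist = hnn_twist_in_words[OF assms(1,2,4)]
  show ?thesis
    by (rule HNN.int_pow_act_orbit[where S = "{p. fst p \<in> carrier H}" and q = "\<lambda>i. (g, i)"])
      (use hnn_class_in_carrier[OF twist] hnn_act_mult[OF assms(1-3)] hnn_act_one[OF assms(1-3)]
        hnn_act_class[OF assms(1-3) twist] hnn_word_act_twist[OF assms] assms(4) in auto)
qed

lemma inj_on_hnn_letter_twist_pair:
  assumes "group H" "\<phi> \<in> iso H H" "subgroup K H"
    and "k \<in> carrier H" "group.ord H k = 0" "g \<in> carrier H" "g \<notin> K"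
  shows "inj_on (\<lambda>(a, b). hnn_class H K \<phi> [Inl k] [^]\<^bsub>HNN H K \<phi>\<^esub> (a::int)
      \<otimes>\<^bsub>HNN H K \<phi>\<^esub> hnn_class H K \<phi> (hnn_twist H \<phi> g) [^]\<^bsub>HNN H K \<phi>\<^esub> (b::int)) UNIV"
    (is "inj_on ?f UNIV")
proof (rule inj_onI)
  interpret G: group H by fact
  interpret HNN: group "HNN H K \<phi>" by (rule group_HNN[OF assms(1)])
  have words: "[Inl k] \<in> hnn_words H" "hnn_twist H \<phi> g \<in> hnn_words H"
    using assms(4) hnn_twist_in_words[OF assms(1,2,6)] by (simp_all add: hnn_words_def)
  have act: "hnn_act H K \<phi> (?f (a, b)) (g, 0) = (k [^]\<^bsub>H\<^esub> a \<otimes>\<^bsub>H\<^esub> g, b)" for a b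
    using hnn_act_mult[OF assms(1-3) HNN.int_pow_closed HNN.int_pow_closed]
      hnn_class_in_carrier[OF words(1)] hnn_class_in_carrier[OF words(2)]
      hnn_act_pow_twist[OF assms(1-3,6,7)] hnn_act_pow_letter[OF assms(1-4,6)] assms(6)
    by simp
  fix p q assume eq: "?f p = ?f q"
  obtain a b c d where pq: "p = (a, b)" "q = (c, d)" by fastforce
  have "k [^]\<^bsub>H\<^esub> a \<otimes>\<^bsub>H\<^esub> g = k [^]\<^bsub>H\<^esub> c \<otimes>\<^bsub>H\<^esub> g" "b = d"
    using act[of a b] act[of c d] eq by (simp_all add: pq)
  then show "p = q" using G.int_pow_eq[OF assms(4)] assms(4-6) by (simp add: pq)
qed

theorem theoremC:
  fixes H :: "('h, 'm) monoid_scheme" and K :: "'h set" and \<phi> :: "'h \<Rightarrow> 'h"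
  assumes "group H"
    and "\<phi> \<in> iso H H"
    and "subgroup K H" and "K \<noteq> carrier H"
    and "K \<subset> normalizer H K"
    and "\<exists>k\<in>K. group.ord H k = 0"
  shows "\<exists>f. f \<in> hom (integer_group \<times>\<times> integer_group) (HNN H K \<phi>)
             \<and> inj_on f (carrier (integer_group \<times>\<times> integer_group))"
proof -
  interpret G: group H by fact
  interpret HNN: group "HNN H K \<phi>" by (rule group_HNN[OF assms(1)])
  obtain k where kK: "k \<in> K" and k_ord: "G.ord k = 0" using assms(6) by blast
  obtain g where gN: "g \<in> normalizer H K" and gK: "g \<notin> K" using assms(5) by blast
  have K: "K \<subseteq> carrier H" using assms(3) subgroup.subset by blast
  have k: "k \<in> carrier H" using kK K by blast
  have g: "g \<in> carrier H" using gN by (simp add: normalizer_def stabilizer_def)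
  have words: "[Inl k] \<in> hnn_words H" "hnn_twist H \<phi> g \<in> hnn_words H"
    using k hnn_twist_in_words[OF assms(1,2) g] by (simp_all add: hnn_words_def)
  have "hnn_class H K \<phi> [Inl k] \<otimes>\<^bsub>HNN H K \<phi>\<^esub> hnn_class H K \<phi> (hnn_twist H \<phi> g)
      = hnn_class H K \<phi> (hnn_twist H \<phi> g) \<otimes>\<^bsub>HNN H K \<phi>\<^esub> hnn_class H K \<phi> [Inl k]"
    using hnn_class_eqI[OF hnn_twist_commute[OF assms(1-3) kK g G.normalizer_conj_mem[OF K gN kK]]]
    by (simp add: hnn_class_mult words)
  then show ?thesis
    using HNN.hom_integer_pair[OF hnn_class_in_carrier[OF words(1)] hnn_class_in_carrier[OF words(2)]]
      inj_on_hnn_letter_twist_pair[OF assms(1-3) k k_ord g gK]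
    by auto
qed

end
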